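(* There exists an instance of the two-party spatial voting game with abstention described in the context, with $X$ consisting of seven policies, both parties' preferences strict and single-peaked, and four voters, that has a pure-strategy Nash equilibrium $(s,t)$ exhibiting mutual leapfrogging, i.e. $t<\tau_A<\tau_B<s$, and at which every voter is active.
   Context: Policy space: $X=\{x_j : j\in I\}$ where $I\subseteq\mathbb Z$ is an interval of integers and $x_j<x_{j+1}$; $X$ is linearly ordered by $<$. Parties: two parties $A$ and $B$ with ideal points $\tau_A=x_p$ and $\tau_B=x_q$, where $p<q$. Each party $i\in\{A,B\}$ has a weak preference order $\succeq_i$ on $X$ with unique ideal point $\tau_i$. Single-peakedness of $\succeq_i$: if $x_a<x_b\le\tau_i$ then $x_b\succ_i x_a$, and if $\tau_i\le x_b<x_a$ then $x_b\succ_i x_a$ (no restriction is imposed on comparisons across opposite sides of $\tau_i$). Voters: a finite electorate $V$. Each voter $v\in V$ has an ideal point $\theta_v\in X$, strict single-peaked preferences over $X$ with peak $\theta_v$, and an attraction interval $A_v\subseteq X$, an interval of the order on $X$ containing $\theta_v$. Election: party $A$ chooses $s\in X$, party $B$ chooses $t\in X$. Voter $v$ is active at $(s,t)$ if $s\in A_v$ or $t\in A_v$. An active voter votes for the platform she strictly prefers and abstains if indifferent (in particular if $s=t$); inactive voters abstain. $N_A(s,t)$ (resp. $N_B(s,t)$) is the number of active voters strictly preferring $s$ to $t$ (resp. $t$ to $s$). The outcome $g(s,t)$ is $A$ if $N_A>N_B$, $B$ if $N_B>N_A$, and $T$ (tie) if equal. Party objectives (lexicographic): Win $\succ$ Tie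 $\succ$ Lose for each party (outcome $A$ is a win for $A$ and a loss for $B$, and vice versa); between profiles with the same electoral outcome, $A$ weakly prefers $(s,t)$ to $(s',t')$ iff $s\succeq_A s'$, and $B$ iff $t\succeq_B t'$. A pure-strategy Nash equilibrium is a profile at which neither party has a strictly preferred unilateral deviation. *)

theory Defs
  imports Complex_Main
begin

(* Preferences are relations R :: 'a => 'a => bool on the policy space X,
   R x y meaning "x is weakly preferred to y". *)

definition weak_order_on :: "'a set \<Rightarrow> ('a \<Rightarrow> 'a \<Rightarrow> bool) \<Rightarrow> bool" where
  "weak_order_on X R \<longleftrightarrow>
     (\<forall>x\<in>X. \<forall>y\<in>X. R x y \<or> R y x) \<and>
     (\<forall>x\<in>X. \<forall>y\<in>X. \<forall>z\<in>X. R x y \<and> R y z \<longrightarrow> R x z)"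

definition spref :: "('a \<Rightarrow> 'a \<Rightarrow> bool) \<Rightarrow> 'a \<Rightarrow> 'a \<Rightarrow> bool" where
  "spref R x y \<longleftrightarrow> R x y \<and> \<not> R y x"

definition strict_order_on :: "'a set \<Rightarrow> ('a \<Rightarrow> 'a \<Rightarrow> bool) \<Rightarrow> bool" where
  "strict_order_on X R \<longleftrightarrow> weak_order_on X R \<and>
     (\<forall>x\<in>X. \<forall>y\<in>X. R x y \<and> R y x \<longrightarrow> x = y)"

definition single_peaked :: "('a::linorder) set \<Rightarrow> ('a \<Rightarrow> 'a \<Rightarrow> bool) \<Rightarrow> 'a \<Rightarrow> bool" where
  "single_peaked X R \<tau> \<longleftrightarrow> \<tau> \<in> X \<and>
     (\<forall>x\<in>X. x \<noteq> \<tau> \<longrightarrow> spref R \<tau> x) \<and>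
     (\<forall>a\<in>X. \<forall>b\<in>X. a < b \<and> b \<le> \<tau> \<longrightarrow> spref R b a) \<and>
     (\<forall>a\<in>X. \<forall>b\<in>X. \<tau> \<le> b \<and> b < a \<longrightarrow> spref R b a)"

definition interval_in :: "('a::linorder) set \<Rightarrow> 'a set \<Rightarrow> bool" where
  "interval_in X S \<longleftrightarrow> S \<subseteq> X \<and>
     (\<forall>a\<in>S. \<forall>c\<in>S. \<forall>b\<in>X. a \<le> b \<and> b \<le> c \<longrightarrow> b \<in> S)"

(* V: voters; th: ideal points; P: voter preferences; Att: attraction intervals *)
definition active :: "('v \<Rightarrow> 'a set) \<Rightarrow> 'v \<Rightarrow> 'a \<Rightarrow> 'a \<Rightarrow> bool" where
  "active Att v s t \<longleftrightarrow> s \<in> Att v \<or> t \<in> Att v"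

definition votesA :: "'v set \<Rightarrow> ('v \<Rightarrow> 'a \<Rightarrow> 'a \<Rightarrow> bool) \<Rightarrow> ('v \<Rightarrow> 'a set) \<Rightarrow> 'a \<Rightarrow> 'a \<Rightarrow> nat" where
  "votesA V P Att s t = card {v\<in>V. active Att v s t \<and> spref (P v) s t}"

definition votesB :: "'v set \<Rightarrow> ('v \<Rightarrow> 'a \<Rightarrow> 'a \<Rightarrow> bool) \<Rightarrow> ('v \<Rightarrow> 'a set) \<Rightarrow> 'a \<Rightarrow> 'a \<Rightarrow> nat" where
  "votesB V P Att s t = card {v\<in>V. active Att v s t \<and> spref (P v) t s}"

datatype outcome = WinA | WinB | Tie

definition outcome :: "'v set \<Rightarrow> ('v \<Rightarrow> 'a \<Rightarrow> 'a \<Rightarrow> bool) \<Rightarrow> ('v \<Rightarrow> 'a set) \<Rightarrow> 'a \<Rightarrow> 'a \<Rightarrow> outcome" where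
  "outcome V P Att s t =
     (if votesA V P Att s t > votesB V P Att s t then WinA
      else if votesB V P Att s t > votesA V P Att s t then WinB else Tie)"

fun rankA :: "outcome \<Rightarrow> nat" where
  "rankA WinA = 2" | "rankA Tie = 1" | "rankA WinB = 0"
fun rankB :: "outcome \<Rightarrow> nat" where
  "rankB WinB = 2" | "rankB Tie = 1" | "rankB WinA = 0"

definition valid_instance ::
  "('a::linorder) set \<Rightarrow> 'a \<Rightarrow> 'a \<Rightarrow> ('a \<Rightarrow> 'a \<Rightarrow> bool) \<Rightarrow> ('a \<Rightarrow> 'a \<Rightarrow> bool)
   \<Rightarrow> 'v set \<Rightarrow> ('v \<Rightarrow> 'a) \<Rightarrow> ('v \<Rightarrow> 'a \<Rightarrow> 'a \<Rightarrow> bool) \<Rightarrow> ('v \<Rightarrow> 'a set) \<Rightarrow> bool" where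
  "valid_instance X \<tau>A \<tau>B RA RB V th P Att \<longleftrightarrow>
     finite V \<and> \<tau>A < \<tau>B \<and>
     weak_order_on X RA \<and> single_peaked X RA \<tau>A \<and>
     weak_order_on X RB \<and> single_peaked X RB \<tau>B \<and>
     (\<forall>v\<in>V. th v \<in> X \<and> strict_order_on X (P v) \<and> single_peaked X (P v) (th v) \<and>
             interval_in X (Att v) \<and> th v \<in> Att v)"

(* pure-strategy Nash equilibrium with lexicographic objectives *)
definition nash ::
  "'a set \<Rightarrow> ('a \<Rightarrow> 'a \<Rightarrow> bool) \<Rightarrow> ('a \<Rightarrow> 'a \<Rightarrow> bool)
   \<Rightarrow> 'v set \<Rightarrow> ('v \<Rightarrow> 'a \<Rightarrow> 'a \<Rightarrow> bool) \<Rightarrow> ('v \<Rightarrow> 'a set) \<Rightarrow> 'a \<Rightarrow> 'a \<Rightarrow> bool" where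
  "nash X RA RB V P Att s t \<longleftrightarrow> s \<in> X \<and> t \<in> X \<and>
     (\<forall>s'\<in>X. \<not> (rankA (outcome V P Att s' t) > rankA (outcome V P Att s t) \<or>
                 (outcome V P Att s' t = outcome V P Att s t \<and> spref RA s' s))) \<and>
     (\<forall>t'\<in>X. \<not> (rankB (outcome V P Att s t') > rankB (outcome V P Att s t) \<or>
                 (outcome V P Att s t' = outcome V P Att s t \<and> spref RB t' t)))"

end

theory Submission
  imports Defs
begin

(* The witness: policies 1, ..., 7 with \<tau>A = 5 and \<tau>B = 6, equilibrium (s, t) = (7, 4).
   A's two supporters have ideal point 7 but are attracted only by {7} and {6, 7}; B's two
   supporters have ideal points 4 and 1 and are attracted only by {2, 3, 4} and {1, ..., 5}.
   At (7, 4) everyone votes and the result is a 2-2 tie. A party moving towards its own ideal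
   point demobilizes one of its supporters and loses, and no deviation wins, so each party
   stays beyond the other's ideal point. *)

fun position :: "'a list \<Rightarrow> 'a \<Rightarrow> nat" where
  "position [] x = 0"
| "position (y # ys) x = (if x = y then 0 else Suc (position ys x))"

definition ranking :: "'a list \<Rightarrow> 'a \<Rightarrow> 'a \<Rightarrow> bool" where
  "ranking xs x y \<longleftrightarrow> position xs x \<le> position xs y"

lemma nth_position: "x \<in> set xs \<Longrightarrow> xs ! position xs x = x"
  by (induction xs) auto

lemma strict_order_on_ranking:
  assumes "set xs = X"
  shows "strict_order_on X (ranking xs)"
proof -
  have "x = y" if "x \<in> set xs" "y \<in> set xs" "position xs x = position xs y" for x y
    using that nth_position by metis
  then show ?thesis
    using assms unfolding strict_order_on_def weak_order_on_def ranking_def by auto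
qed

lemma votesA_eq_sum:
  "finite V \<Longrightarrow>
    votesA V P Att s t = (\<Sum>v\<in>V. if active Att v s t \<and> spref (P v) s t then 1 else 0)"
  unfolding votesA_def by (simp add: sum.If_cases Int_def)

lemma votesB_eq_sum:
  "finite V \<Longrightarrow>
    votesB V P Att s t = (\<Sum>v\<in>V. if active Att v s t \<and> spref (P v) t s then 1 else 0)"
  unfolding votesB_def by (simp add: sum.If_cases Int_def)

definition policies :: "real set" where
  "policies = {1, 2, 3, 4, 5, 6, 7}"

definition pref_A :: "real \<Rightarrow> real \<Rightarrow> bool" where
  "pref_A = ranking [5, 6, 7, 4, 3, 2, 1]"

definition pref_B :: "real \<Rightarrow> real \<Rightarrow> bool" where
  "pref_B = ranking [6, 5, 4, 3, 2, 7, 1]"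

definition voters :: "nat set" where
  "voters = {0, 1, 2, 3}"

definition voter_ranking :: "nat \<Rightarrow> real list" where
  "voter_ranking v =
     [[7, 6, 5, 4, 3, 2, 1], [4, 3, 2, 5, 6, 1, 7], [1, 2, 3, 4, 5, 6, 7], [7, 6, 5, 4, 3, 2, 1]] ! v"

definition voter_pref :: "nat \<Rightarrow> real \<Rightarrow> real \<Rightarrow> bool" where
  "voter_pref v = ranking (voter_ranking v)"

definition ideal :: "nat \<Rightarrow> real" where
  "ideal v = hd (voter_ranking v)"

definition attraction :: "nat \<Rightarrow> real set" where
  "attraction v = [{7}, {2, 3, 4}, {1, 2, 3, 4, 5}, {6, 7}] ! v"

lemma card_policies: "card policies = 7"
  by (simp add: policies_def)

lemma card_voters: "card voters = 4"
  by (simp add: voters_def)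

lemma finite_voters: "finite voters"
  by (simp add: voters_def)

lemma set_rankings:
  "set [5, 6, 7, 4, 3, 2, 1] = policies"
  "set [6, 5, 4, 3, 2, 7, 1] = policies"
  "v \<in> voters \<Longrightarrow> set (voter_ranking v) = policies"
  unfolding policies_def voters_def voter_ranking_def by auto

lemma strict_prefs:
  "strict_order_on policies pref_A"
  "strict_order_on policies pref_B"
  "v \<in> voters \<Longrightarrow> strict_order_on policies (voter_pref v)"
  unfolding pref_A_def pref_B_def voter_pref_def
  by (rule strict_order_on_ranking set_rankings | assumption)+

lemma single_peaked_prefs:
  "single_peaked policies pref_A 5"
  "single_peaked policies pref_B 6"
  "v \<in> voters \<Longrightarrow> single_peaked policies (voter_pref v) (ideal v)"
  unfolding single_peaked_def spref_def pref_A_def pref_B_def voter_pref_def ideal_def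
  by (auto simp: policies_def voters_def ranking_def voter_ranking_def)

lemma attraction_intervals:
  "v \<in> voters \<Longrightarrow> interval_in policies (attraction v)"
  "v \<in> voters \<Longrightarrow> ideal v \<in> attraction v"
  unfolding interval_in_def
  by (auto simp: policies_def voters_def attraction_def ideal_def voter_ranking_def)

lemma valid_example: "valid_instance policies 5 6 pref_A pref_B voters ideal voter_pref attraction"
proof -
  have "ideal v \<in> policies" if "v \<in> voters" for v
    using single_peaked_prefs(3)[OF that] by (simp add: single_peaked_def)
  then show ?thesis
    using finite_voters strict_prefs single_peaked_prefs attraction_intervals
    unfolding valid_instance_def strict_order_on_def by simp
qed

lemma nash_example: "nash policies pref_A pref_B voters voter_pref attraction 7 4"
  unfolding nash_def outcome_def votesA_eq_sum[OF finite_voters] votesB_eq_sum[OF finite_voters]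
  by (simp add: voters_def policies_def active_def spref_def ranking_def
      pref_A_def pref_B_def voter_pref_def voter_ranking_def attraction_def)

lemma all_active_example: "\<forall>v\<in>voters. active attraction v 7 4"
  by (simp add: voters_def active_def attraction_def)

theorem mainTheorem5:
  shows "\<exists>(X::real set) (\<tau>A::real) \<tau>B RA RB (V::nat set) th P Att s t.
    card X = 7 \<and> card V = 4 \<and>
    valid_instance X \<tau>A \<tau>B RA RB V th P Att \<and>
    strict_order_on X RA \<and> strict_order_on X RB \<and>
    nash X RA RB V P Att s t \<and>
    t < \<tau>A \<and> \<tau>A < \<tau>B \<and> \<tau>B < s \<and>
    (\<forall>v\<in>V. active Att v s t)"
  using card_policies card_voters valid_example strict_prefs(1,2) nash_example all_active_example
  by fastforce

end
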